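(* Let $g_1,g_2$ be independent exponential random variables with means $\varepsilon_1,\varepsilon_2>0$, let $P_s,P_d,\sigma^2>0$ and $R_d>0$, and put $\gamma_o=2^{2R_d}-1$. Then the connection outage probability of amplify-and-forward relaying, $$p_o^{\mathrm{AF}}=\Pr\Big(\frac{P_s^2g_1g_2}{\sigma^2[P_sg_1+(P_s+P_d)g_2+\sigma^2]}<\gamma_o\Big),$$ equals $$1-e^{-\frac{\gamma_o\sigma^2}{P_s}\left(\frac{P_s+P_d}{P_s\varepsilon_1}+\frac1{\varepsilon_2}\right)}\,z\,K_1(z),\qquad z=\frac{2\gamma_o\sigma^2}{P_s}\sqrt{\frac{1}{\varepsilon_1\varepsilon_2}\Big(\frac{P_s+P_d}{P_s}+\frac1{\gamma_o}\Big)},$$ where $K_1$ is the first-order modified Bessel function of the second kind.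
   Context: In amplify-and-forward (AF) relaying the relay scales its received signal $h_1x_s+h_2x_d+n_r$ by $\tau=\sqrt{P_s/(g_1P_s+g_2P_d+\sigma^2)}$ and forwards it; after the destination removes its own known artificial noise, the end-to-end SNR is $\frac{P_s^2g_1g_2}{\sigma^2[P_sg_1+P_sg_2+P_dg_2+\sigma^2]}$. Here $g_i=|h_i|^2$, $h_i\sim\mathcal{CN}(0,\varepsilon_i)$ independent, $P_s$ the source/relay power, $P_d$ the destination's artificial-noise power, $\sigma^2$ the noise variance. *)

theory Defs
  imports "HOL-Probability.Probability"
begin

text \<open>Modified Bessel function of the second kind of order one, for z > 0,
  via its standard integral representation (DLMF 10.32.9):
  K_1(z) = integral over t in [0,oo) of exp(-z cosh t) cosh t.\<close>
definition besselK1 :: "real \<Rightarrow> real" where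
  "besselK1 z = (LBINT t:{0..}. exp (- z * cosh t) * cosh t)"

end

theory Submission
  imports Defs
begin

(* For fixed g2 = y the SNR exceeds gamma
   iff y > c = gamma sigma2 / Ps and g1 >= T(y), so integrating out g1 leaves the exponential tail
   exp (-T(y) / eps1). After the shift u = y - c the exponent splits into a constant plus
   u / eps2 + beta / u, and the classical integral
     int_0^oo exp (-(a u + b / u)) du = 2 sqrt (b / a) K_1 (2 sqrt (a b)),
   obtained by substituting u = sqrt (b / a) e^t, which turns a u + b / u into 2 sqrt (a b) cosh t,
   produces the Bessel function. *)

definition af_snr :: "real \<Rightarrow> real \<Rightarrow> real \<Rightarrow> real \<Rightarrow> real \<Rightarrow> real" where
  "af_snr Ps Pd sigma2 x y = Ps\<^sup>2 * x * y / (sigma2 * (Ps * x + (Ps + Pd) * y + sigma2))"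

lemma nn_integral_exponential_density_atLeast:
  fixes l T :: real
  assumes l: "0 < l" and T: "0 \<le> T"
  shows "(\<integral>\<^sup>+x. ennreal (exponential_density l x) * indicator {T..} x \<partial>lborel) = ennreal (exp (- T * l))"
proof -
  have "(\<integral>\<^sup>+x. ennreal (exponential_density l x) * indicator {T..} x \<partial>lborel)
      = (\<integral>\<^sup>+x. ennreal (exponential_density l (T + 1 * x)) * indicator {T..} (T + 1 * x) \<partial>lborel)"
    using nn_integral_real_affine[where f="\<lambda>x. ennreal (exponential_density l x) * indicator {T..} x" and c=1 and t=T]
    by simp
  also have "\<dots> = (\<integral>\<^sup>+x. ennreal (exp (- T * l)) * ennreal (exponential_density l x) \<partial>lborel)"
    using T l by (intro nn_integral_cong)
      (auto simp: exponential_density_def ennreal_mult'[symmetric] exp_add[symmetric] algebra_simps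
            split: split_indicator)
  also have "\<dots> = ennreal (exp (- T * l)) * (\<integral>\<^sup>+x. ennreal (exponential_density l x) \<partial>lborel)"
    by (rule nn_integral_cmult) auto
  also have "(\<integral>\<^sup>+x. ennreal (exponential_density l x) \<partial>lborel) = 1"
    using nn_integral_erlang_ith_moment[OF l, of 0 0] by simp
  finally show ?thesis by simp
qed

lemma af_snr_ge_iff:
  fixes Ps Pd sigma2 gamma x y :: real
  assumes Ps: "0 < Ps" and Pd: "0 \<le> Pd" and s: "0 < sigma2" and g: "0 < gamma"
    and x: "0 \<le> x" and y: "0 \<le> y"
  shows "gamma \<le> af_snr Ps Pd sigma2 x y \<longleftrightarrow>
    gamma * sigma2 / Ps < y \<and>
    gamma * sigma2 * ((Ps + Pd) * y + sigma2) / (Ps\<^sup>2 * (y - gamma * sigma2 / Ps)) \<le> x"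
proof -
  define c where "c = gamma * sigma2 / Ps"
  define a where "a = gamma * sigma2 * ((Ps + Pd) * y + sigma2)"
  have a: "0 < a"
    unfolding a_def using Ps Pd s g y by (intro mult_pos_pos add_nonneg_pos) auto
  have "0 < sigma2 * (Ps * x + (Ps + Pd) * y + sigma2)"
    using Ps Pd s x y by (intro mult_pos_pos add_nonneg_pos add_nonneg_nonneg) auto
  then have "gamma \<le> af_snr Ps Pd sigma2 x y \<longleftrightarrow>
      gamma * (sigma2 * (Ps * x + (Ps + Pd) * y + sigma2)) \<le> Ps\<^sup>2 * x * y"
    by (simp add: af_snr_def pos_le_divide_eq)
  also have "\<dots> \<longleftrightarrow> a \<le> x * (Ps\<^sup>2 * (y - c))"
  proof -
    have "Ps\<^sup>2 * x * y - gamma * (sigma2 * (Ps * x + (Ps + Pd) * y + sigma2)) = x * (Ps\<^sup>2 * (y - c)) - a"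
      using Ps by (simp add: a_def c_def power2_eq_square field_simps)
    then show ?thesis by linarith
  qed
  also have "\<dots> \<longleftrightarrow> c < y \<and> a / (Ps\<^sup>2 * (y - c)) \<le> x"
  proof (cases "c < y")
    case True
    then show ?thesis using Ps by (simp add: pos_divide_le_eq)
  next
    case False
    then have "x * (Ps\<^sup>2 * (y - c)) \<le> 0"
      using x by (intro mult_nonneg_nonpos) auto
    then show ?thesis using False a by auto
  qed
  finally show ?thesis by (simp add: a_def c_def)
qed

lemma nn_integral_exponential_density_af_snr_ge:
  fixes Ps Pd sigma2 gamma l y :: real
  assumes Ps: "0 < Ps" and Pd: "0 \<le> Pd" and s: "0 < sigma2" and g: "0 < gamma"
    and l: "0 < l" and y: "0 \<le> y"
  shows "(\<integral>\<^sup>+x. ennreal (exponential_density l x) * indicator {x. gamma \<le> af_snr Ps Pd sigma2 x y} x \<partial>lborel)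
    = indicator {gamma * sigma2 / Ps<..} y *
      ennreal (exp (- (gamma * sigma2 * ((Ps + Pd) * y + sigma2) / (Ps\<^sup>2 * (y - gamma * sigma2 / Ps))) * l))"
proof -
  define c where "c = gamma * sigma2 / Ps"
  define T where "T = gamma * sigma2 * ((Ps + Pd) * y + sigma2) / (Ps\<^sup>2 * (y - c))"
  have snr_ge: "gamma \<le> af_snr Ps Pd sigma2 x y \<longleftrightarrow> c < y \<and> T \<le> x" if "0 \<le> x" for x
    unfolding c_def T_def by (rule af_snr_ge_iff[OF Ps Pd s g that y])
  show ?thesis
  proof (cases "c < y")
    case True
    have T: "0 \<le> T"
      unfolding T_def using True Ps Pd s g y by (intro divide_nonneg_pos mult_nonneg_nonneg) auto
    have "(\<integral>\<^sup>+x. ennreal (exponential_density l x) * indicator {x. gamma \<le> af_snr Ps Pd sigma2 x y} x \<partial>lborel)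
        = (\<integral>\<^sup>+x. ennreal (exponential_density l x) * indicator {T..} x \<partial>lborel)"
      using True snr_ge by (intro nn_integral_cong) (auto simp: exponential_density_def split: split_indicator)
    also have "\<dots> = ennreal (exp (- T * l))"
      by (rule nn_integral_exponential_density_atLeast[OF l T])
    finally show ?thesis using True by (simp add: T_def c_def)
  next
    case False
    have "(\<integral>\<^sup>+x. ennreal (exponential_density l x) * indicator {x. gamma \<le> af_snr Ps Pd sigma2 x y} x \<partial>lborel)
        = (\<integral>\<^sup>+(x::real). 0 \<partial>lborel)"
      using False snr_ge by (intro nn_integral_cong) (auto simp: exponential_density_def split: split_indicator)
    then show ?thesis using False by (simp add: c_def)
  qed
qed

lemma nn_integral_substitution_exp:
  fixes h :: "real \<Rightarrow> real" and k :: real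
  assumes k: "0 < k" and [measurable]: "h \<in> borel_measurable borel"
  shows "(\<integral>\<^sup>+u. ennreal (h u) * indicator {0<..} u \<partial>lborel)
       = (\<integral>\<^sup>+t. ennreal (h (k * exp t) * (k * exp t)) \<partial>lborel)"
proof -
  \<comment> \<open>The library rule only covers compact intervals; exhaust \<open>{0<..}\<close> by the intervals \<open>{k * exp (- n) .. k * exp n}\<close>.\<close>
  define D where "D = density lborel (\<lambda>u. ennreal (h u))"
  define E where "E = density lborel (\<lambda>t. ennreal (h (k * exp t) * (k * exp t)))"
  define A where "A n = {k * exp (- real n) .. k * exp (real n)}" for n :: nat
  define B where "B n = {- real n .. real n}" for n :: nat
  have DA_eq_EB: "emeasure D (A n) = emeasure E (B n)" for n
  proof -
    have "(\<integral>\<^sup>+u. h u * indicator {(\<lambda>t. k * exp t) (- real n) .. (\<lambda>t. k * exp t) (real n)} u \<partial>lborel)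
        = (\<integral>\<^sup>+t. h (k * exp t) * (k * exp t) * indicator {- real n .. real n} t \<partial>lborel)"
      using k by (intro nn_integral_substitution)
        (auto simp: set_borel_measurable_def intro!: derivative_eq_intros continuous_intros)
    then show ?thesis
      by (simp add: D_def E_def A_def B_def emeasure_density mult.commute[of _ "indicator _ _"]
          indicator_mult_ennreal)
  qed
  have "incseq A"
    using k by (intro incseq_SucI) (auto simp: A_def)
  moreover have "range A \<subseteq> sets D"
    by (auto simp: D_def A_def)
  moreover have "(\<Union>n. A n) = {0<..}"
  proof (intro equalityI subsetI)
    fix u :: real
    assume "u \<in> {0<..}"
    moreover obtain n :: nat where n: "\<bar>ln (u / k)\<bar> \<le> real n"
      using real_arch_simple by blast
    then have "exp (- real n) \<le> exp (ln (u / k))" "exp (ln (u / k)) \<le> exp (real n)"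
      by auto
    ultimately have "exp (- real n) \<le> u / k" "u / k \<le> exp (real n)"
      using k by auto
    then show "u \<in> (\<Union>n. A n)"
      using k by (auto simp: A_def field_simps)
  qed (use k in \<open>auto simp: A_def intro: less_le_trans[rotated]\<close>)
  ultimately have D_SUP: "emeasure D {0<..} = (SUP n. emeasure D (A n))"
    by (simp add: SUP_emeasure_incseq)
  have "incseq B"
    by (intro incseq_SucI) (auto simp: B_def)
  moreover have "range B \<subseteq> sets E"
    by (auto simp: E_def B_def)
  moreover have "(\<Union>n. B n) = UNIV"
  proof (intro equalityI subsetI)
    fix t :: real
    obtain n :: nat where "\<bar>t\<bar> \<le> real n"
      using real_arch_simple by blast
    then have "t \<in> B n"
      by (auto simp: B_def)
    then show "t \<in> (\<Union>n. B n)"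
      by blast
  qed auto
  ultimately have E_SUP: "emeasure E UNIV = (SUP n. emeasure E (B n))"
    by (simp add: SUP_emeasure_incseq)
  have "emeasure D {0<..} = emeasure E UNIV"
    by (simp only: D_SUP E_SUP DA_eq_EB)
  then show ?thesis
    by (simp add: D_def E_def emeasure_density)
qed

lemma borel_measurable_cosh [measurable]: "(cosh :: real \<Rightarrow> real) \<in> borel_measurable borel"
  by (intro borel_measurable_continuous_onI continuous_intros)

lemma nn_integral_exp_cosh_mult_exp:
  fixes z :: real
  shows "(\<integral>\<^sup>+t. ennreal (exp (- z * cosh t) * exp t) \<partial>lborel)
       = 2 * (\<integral>\<^sup>+t. ennreal (exp (- z * cosh t) * cosh t) * indicator {0..} t \<partial>lborel)"
proof -
  define F where "F t = ennreal (exp (- z * cosh t) * exp t)" for t :: real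
  have [measurable]: "F \<in> borel_measurable borel"
    unfolding F_def by (intro measurable_compose[OF _ measurable_ennreal]
        borel_measurable_continuous_onI continuous_intros)
  have "(\<integral>\<^sup>+t. F t \<partial>lborel)
      = (\<integral>\<^sup>+t. F t * indicator {0..} t \<partial>lborel) + (\<integral>\<^sup>+t. F t * indicator {..<0} t \<partial>lborel)"
    by (subst nn_integral_add[symmetric]) (auto intro!: nn_integral_cong split: split_indicator)
  also have "(\<integral>\<^sup>+t. F t * indicator {..<0} t \<partial>lborel) = (\<integral>\<^sup>+t. F (- t) * indicator {0<..} t \<partial>lborel)"
    using nn_integral_real_affine[where f="\<lambda>t. F t * indicator {..<0} t" and c="-1" and t=0]
    by (simp add: indicator_def)
  also have "\<dots> = (\<integral>\<^sup>+t. F (- t) * indicator {0..} t \<partial>lborel)"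
    by (intro nn_integral_cong_AE)
      (use AE_lborel_singleton[of 0] in \<open>auto elim!: eventually_mono split: split_indicator\<close>)
  also have "(\<integral>\<^sup>+t. F t * indicator {0..} t \<partial>lborel) + \<dots> = (\<integral>\<^sup>+t. (F t + F (- t)) * indicator {0..} t \<partial>lborel)"
    by (subst nn_integral_add[symmetric]) (auto intro!: nn_integral_cong simp: distrib_right)
  also have "\<dots> = (\<integral>\<^sup>+t. 2 * (ennreal (exp (- z * cosh t) * cosh t) * indicator {0..} t) \<partial>lborel)"
  proof (intro nn_integral_cong)
    fix t :: real
    have "F t + F (- t) = ennreal (2 * (exp (- z * cosh t) * cosh t))"
      by (simp add: F_def cosh_def algebra_simps ennreal_plus[symmetric] del: ennreal_plus)
    then show "(F t + F (- t)) * indicator {0..} t = 2 * (ennreal (exp (- z * cosh t) * cosh t) * indicator {0..} t)"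
      by (simp add: ennreal_mult' mult.assoc)
  qed
  also have "\<dots> = 2 * (\<integral>\<^sup>+t. ennreal (exp (- z * cosh t) * cosh t) * indicator {0..} t \<partial>lborel)"
    by (rule nn_integral_cmult) auto
  finally show ?thesis by (simp add: F_def)
qed

lemma besselK1_eq_nn_integral:
  "besselK1 z = enn2real (\<integral>\<^sup>+t. ennreal (exp (- z * cosh t) * cosh t) * indicator {0..} t \<partial>lborel)"
proof -
  have "besselK1 z = integral\<^sup>L lborel (\<lambda>t. indicator {0..} t * (exp (- z * cosh t) * cosh t))"
    by (simp add: besselK1_def set_lebesgue_integral_def)
  also have "\<dots> = enn2real (\<integral>\<^sup>+t. ennreal (indicator {0..} t * (exp (- z * cosh t) * cosh t)) \<partial>lborel)"
    by (rule integral_eq_nn_integral) auto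
  finally show ?thesis
    by (simp add: indicator_mult_ennreal[symmetric] mult.commute)
qed

lemma nn_integral_exp_linear_plus_inverse:
  fixes a b :: real
  assumes a: "0 < a" and b: "0 < b"
  shows "enn2real (\<integral>\<^sup>+u. ennreal (exp (- (a * u + b / u))) * indicator {0<..} u \<partial>lborel)
       = 2 * sqrt (b / a) * besselK1 (2 * sqrt (a * b))"
proof -
  define k where "k = sqrt (b / a)"
  define z where "z = 2 * sqrt (a * b)"
  have k: "0 < k" using a b by (simp add: k_def)
  have exponent: "a * (k * exp t) + b / (k * exp t) = z * cosh t" for t
  proof -
    have "sqrt (a * b) = sqrt (a\<^sup>2 * (b / a))" "sqrt (a * b) = sqrt (b\<^sup>2 / (b / a))"
      using a b by (simp_all add: power2_eq_square field_simps)
    then have "a * k = sqrt (a * b)" "b / k = sqrt (a * b)"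
      using a b by (simp_all add: k_def real_sqrt_mult real_sqrt_divide)
    moreover have "a * (k * exp t) + b / (k * exp t) = (a * k) * exp t + (b / k) * exp (- t)"
      using k by (simp add: exp_minus field_simps)
    ultimately show ?thesis
      by (simp add: z_def cosh_def algebra_simps)
  qed
  have "(\<integral>\<^sup>+u. ennreal (exp (- (a * u + b / u))) * indicator {0<..} u \<partial>lborel)
      = (\<integral>\<^sup>+t. ennreal (exp (- (a * (k * exp t) + b / (k * exp t))) * (k * exp t)) \<partial>lborel)"
    by (rule nn_integral_substitution_exp[OF k, where h="\<lambda>u. exp (- (a * u + b / u))"]) auto
  also have "\<dots> = (\<integral>\<^sup>+t. ennreal k * ennreal (exp (- z * cosh t) * exp t) \<partial>lborel)"
    using k by (simp add: exponent ennreal_mult[symmetric] algebra_simps)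
  also have "\<dots> = ennreal k * (\<integral>\<^sup>+t. ennreal (exp (- z * cosh t) * exp t) \<partial>lborel)"
    by (rule nn_integral_cmult) auto
  also have "\<dots> = ennreal k * (2 * (\<integral>\<^sup>+t. ennreal (exp (- z * cosh t) * cosh t) * indicator {0..} t \<partial>lborel))"
    by (simp only: nn_integral_exp_cosh_mult_exp)
  finally show ?thesis
    using k by (simp add: enn2real_mult besselK1_eq_nn_integral k_def z_def)
qed

lemma (in prob_space) emeasure_pair_indep_distributed:
  fixes X Y :: "'a \<Rightarrow> real" and f g :: "real \<Rightarrow> ennreal"
  assumes X: "distributed M lborel X f" and Y: "distributed M lborel Y g"
    and indep: "indep_var borel X borel Y" and [measurable]: "A \<in> sets (borel \<Otimes>\<^sub>M borel)"
  shows "emeasure M {\<omega> \<in> space M. (X \<omega>, Y \<omega>) \<in> A}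
       = (\<integral>\<^sup>+y. g y * (\<integral>\<^sup>+x. f x * indicator A (x, y) \<partial>lborel) \<partial>lborel)"
proof -
  have [measurable]: "f \<in> borel_measurable borel" "g \<in> borel_measurable borel"
    using distributed_borel_measurable[OF X] distributed_borel_measurable[OF Y] by simp_all
  \<comment> \<open>Independence only depends on the sigma-algebras, which agree for \<open>borel\<close> and \<open>lborel\<close>.\<close>
  have sets_eq: "sets (case_bool lborel lborel i) = sets (case_bool borel borel i :: real measure)" for i
    by (simp split: bool.split)
  have "indep_var lborel X lborel Y"
    using indep unfolding indep_var_def indep_vars_def2
    by (simp add: sets_eq measurable_cong_sets[OF refl sets_eq])
  then have XY: "distributed M (lborel \<Otimes>\<^sub>M lborel) (\<lambda>\<omega>. (X \<omega>, Y \<omega>)) (\<lambda>(x, y). f x * g y)"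
    by (intro distributed_joint_indep[OF lborel.sigma_finite_measure_axioms
          lborel.sigma_finite_measure_axioms X Y])
  have "{\<omega> \<in> space M. (X \<omega>, Y \<omega>) \<in> A} = (\<lambda>\<omega>. (X \<omega>, Y \<omega>)) -` A \<inter> space M"
    by auto
  also have "emeasure M \<dots> = (\<integral>\<^sup>+p. (case p of (x, y) \<Rightarrow> f x * g y) * indicator A p \<partial>(lborel \<Otimes>\<^sub>M lborel))"
    by (rule distributed_emeasure[OF XY]) simp
  also have "\<dots> = (\<integral>\<^sup>+y. (\<integral>\<^sup>+x. g y * (f x * indicator A (x, y)) \<partial>lborel) \<partial>lborel)"
    by (subst lborel_pair.nn_integral_snd[symmetric]) (auto intro!: nn_integral_cong simp: ac_simps)
  also have "\<dots> = (\<integral>\<^sup>+y. g y * (\<integral>\<^sup>+x. f x * indicator A (x, y) \<partial>lborel) \<partial>lborel)"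
    by (intro nn_integral_cong nn_integral_cmult) simp
  finally show ?thesis .
qed

lemma af_exponent_split:
  fixes Ps Pd sigma2 gamma eps1 eps2 c u :: real
  assumes "0 < Ps" "0 < sigma2" "0 < gamma" "0 < eps1" "0 < eps2" "0 < u"
    and c: "c = gamma * sigma2 / Ps"
  shows "(c + u) / eps2 + gamma * sigma2 * ((Ps + Pd) * (c + u) + sigma2) / (Ps\<^sup>2 * u) / eps1
       = c * ((Ps + Pd) / (Ps * eps1) + 1 / eps2) + (u / eps2 + c\<^sup>2 * ((Ps + Pd) / Ps + 1 / gamma) / eps1 / u)"
  using assms(1-6) unfolding c by (simp add: field_simps power2_eq_square)

lemma af_success_integral:
  fixes Ps Pd sigma2 gamma eps1 eps2 z :: real
  assumes Ps: "0 < Ps" and Pd: "0 \<le> Pd" and s: "0 < sigma2" and g: "0 < gamma"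
    and e1: "0 < eps1" and e2: "0 < eps2"
    and z: "z = 2 * gamma * sigma2 / Ps * sqrt (1 / (eps1 * eps2) * ((Ps + Pd) / Ps + 1 / gamma))"
  shows "enn2real (\<integral>\<^sup>+y. ennreal (exponential_density (1 / eps2) y) *
      (\<integral>\<^sup>+x. ennreal (exponential_density (1 / eps1) x) *
        indicator {x. gamma \<le> af_snr Ps Pd sigma2 x y} x \<partial>lborel) \<partial>lborel)
    = exp (- (gamma * sigma2 / Ps) * ((Ps + Pd) / (Ps * eps1) + 1 / eps2)) * z * besselK1 z"
proof -
  define c where "c = gamma * sigma2 / Ps"
  define \<beta> where "\<beta> = c\<^sup>2 * ((Ps + Pd) / Ps + 1 / gamma) / eps1"
  define C where "C = exp (- c * ((Ps + Pd) / (Ps * eps1) + 1 / eps2))"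
  have c: "0 < c" using Ps s g by (simp add: c_def)
  have C: "0 < C" by (simp add: C_def)
  have \<beta>: "0 < \<beta>" using c Ps Pd g e1 by (simp add: \<beta>_def add_nonneg_pos)
  have integrand: "ennreal (exponential_density (1 / eps2) y) *
      (\<integral>\<^sup>+x. ennreal (exponential_density (1 / eps1) x) *
        indicator {x. gamma \<le> af_snr Ps Pd sigma2 x y} x \<partial>lborel)
    = ennreal (C / eps2) * (ennreal (exp (- (1 / eps2 * (y - c) + \<beta> / (y - c)))) * indicator {c<..} y)"
    for y
  proof (cases "c < y")
    case True
    define u where "u = y - c"
    have u: "0 < u" "y = c + u" using True by (simp_all add: u_def)
    have "exponential_density (1 / eps2) y *
        exp (- (gamma * sigma2 * ((Ps + Pd) * y + sigma2) / (Ps\<^sup>2 * (y - c))) * (1 / eps1))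
      = 1 / eps2 * exp (- (y / eps2 + gamma * sigma2 * ((Ps + Pd) * y + sigma2) / (Ps\<^sup>2 * (y - c)) / eps1))"
      using True c by (simp add: exponential_density_def exp_add[symmetric] field_simps)
    also have "\<dots> = C / eps2 * exp (- (1 / eps2 * (y - c) + \<beta> / (y - c)))"
      using af_exponent_split[OF Ps s g e1 e2 u(1) c_def, of Pd]
      by (simp add: u C_def \<beta>_def exp_add[symmetric] exp_minus_inverse field_simps)
    finally have "ennreal (exponential_density (1 / eps2) y) *
        ennreal (exp (- (gamma * sigma2 * ((Ps + Pd) * y + sigma2) / (Ps\<^sup>2 * (y - c))) * (1 / eps1)))
      = ennreal (C / eps2) * ennreal (exp (- (1 / eps2 * (y - c) + \<beta> / (y - c))))"
      using e2 by (simp add: C_def ennreal_mult[symmetric] exponential_density_nonneg del: ennreal_1)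
    then show ?thesis
      using True c e1 nn_integral_exponential_density_af_snr_ge[OF Ps Pd s g, of "1 / eps1" y]
      by (simp add: c_def)
  next
    case False
    then show ?thesis
      using c e1 nn_integral_exponential_density_af_snr_ge[OF Ps Pd s g, of "1 / eps1" y]
      by (cases "y < 0") (simp_all add: exponential_density_def c_def)
  qed
  have "(\<integral>\<^sup>+y. ennreal (exp (- (1 / eps2 * (y - c) + \<beta> / (y - c)))) * indicator {c<..} y \<partial>lborel)
      = (\<integral>\<^sup>+u. ennreal (exp (- (1 / eps2 * u + \<beta> / u))) * indicator {0<..} u \<partial>lborel)"
    using nn_integral_real_affine[where c=1 and t=c and
        f="\<lambda>y. ennreal (exp (- (1 / eps2 * (y - c) + \<beta> / (y - c)))) * indicator {c<..} y"]
    by (simp add: indicator_def)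
  then have integral: "enn2real (\<integral>\<^sup>+y. ennreal (exponential_density (1 / eps2) y) *
      (\<integral>\<^sup>+x. ennreal (exponential_density (1 / eps1) x) *
        indicator {x. gamma \<le> af_snr Ps Pd sigma2 x y} x \<partial>lborel) \<partial>lborel)
    = C / eps2 * (2 * sqrt (\<beta> / (1 / eps2)) * besselK1 (2 * sqrt (1 / eps2 * \<beta>)))"
    using e2 C nn_integral_exp_linear_plus_inverse[of "1 / eps2" \<beta>] \<beta>
    by (simp add: integrand nn_integral_cmult enn2real_mult)
  have z_eq: "2 * sqrt (1 / eps2 * \<beta>) = z"
  proof -
    have "1 / eps2 * \<beta> = c\<^sup>2 * (1 / (eps1 * eps2) * ((Ps + Pd) / Ps + 1 / gamma))"
      by (simp add: \<beta>_def field_simps)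
    then have "sqrt (1 / eps2 * \<beta>) = sqrt (c\<^sup>2) * sqrt (1 / (eps1 * eps2) * ((Ps + Pd) / Ps + 1 / gamma))"
      by (simp only: real_sqrt_mult)
    then show ?thesis
      using Ps s g by (simp add: z c_def)
  qed
  have sqrt_eq: "sqrt (\<beta> / (1 / eps2)) / eps2 = sqrt (1 / eps2 * \<beta>)"
  proof -
    have "\<beta> / (1 / eps2) = eps2\<^sup>2 * (1 / eps2 * \<beta>)"
      using e2 by (simp add: power2_eq_square field_simps)
    then have "sqrt (\<beta> / (1 / eps2)) = sqrt (eps2\<^sup>2) * sqrt (1 / eps2 * \<beta>)"
      by (simp only: real_sqrt_mult)
    then show ?thesis
      using e2 by simp
  qed
  have "C / eps2 * (2 * sqrt (\<beta> / (1 / eps2)) * besselK1 (2 * sqrt (1 / eps2 * \<beta>)))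
      = C * (2 * (sqrt (\<beta> / (1 / eps2)) / eps2)) * besselK1 z"
    by (simp only: z_eq) (simp add: field_simps)
  also have "\<dots> = C * z * besselK1 z"
    by (simp only: sqrt_eq z_eq)
  finally show ?thesis
    by (simp only: integral C_def c_def)
qed

theorem mainTheorem6:
  fixes M :: "'a measure" and g1 g2 :: "'a \<Rightarrow> real"
    and eps1 eps2 Ps Pd sigma2 Rd :: real
  assumes "prob_space M"
    and "eps1 > 0" and "eps2 > 0"
    and "distributed M lborel g1 (exponential_density (1 / eps1))"
    and "distributed M lborel g2 (exponential_density (1 / eps2))"
    and "prob_space.indep_var M borel g1 borel g2"
    and "Ps > 0" and "Pd > 0" and "sigma2 > 0" and "Rd > 0"
  shows "let gamma_o = 2 powr (2 * Rd) - 1;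
             z = 2 * gamma_o * sigma2 / Ps *
                 sqrt (1 / (eps1 * eps2) * ((Ps + Pd) / Ps + 1 / gamma_o))
         in measure M {\<omega> \<in> space M.
               Ps\<^sup>2 * g1 \<omega> * g2 \<omega> /
               (sigma2 * (Ps * g1 \<omega> + (Ps + Pd) * g2 \<omega> + sigma2)) < gamma_o}
            = 1 - exp (- (gamma_o * sigma2 / Ps) * ((Ps + Pd) / (Ps * eps1) + 1 / eps2))
                  * z * besselK1 z"
proof -
  interpret prob_space M by fact
  define gamma where "gamma = 2 powr (2 * Rd) - (1::real)"
  define z where "z = 2 * gamma * sigma2 / Ps * sqrt (1 / (eps1 * eps2) * ((Ps + Pd) / Ps + 1 / gamma))"
  define A where "A = {p :: real \<times> real. gamma \<le> af_snr Ps Pd sigma2 (fst p) (snd p)}"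
  define S where "S = {\<omega> \<in> space M. (g1 \<omega>, g2 \<omega>) \<in> A}"
  have gamma: "0 < gamma"
    using \<open>Rd > 0\<close> by (simp add: gamma_def)
  have [measurable]: "g1 \<in> borel_measurable M" "g2 \<in> borel_measurable M"
    using distributed_measurable[OF assms(4)] distributed_measurable[OF assms(5)] by simp_all
  have "{p \<in> space (borel \<Otimes>\<^sub>M borel). gamma \<le> af_snr Ps Pd sigma2 (fst p) (snd p)} \<in> sets (borel \<Otimes>\<^sub>M borel)"
    unfolding af_snr_def by measurable
  then have A[measurable]: "A \<in> sets (borel \<Otimes>\<^sub>M borel)"
    by (simp add: A_def space_pair_measure)
  have "measure M S = exp (- (gamma * sigma2 / Ps) * ((Ps + Pd) / (Ps * eps1) + 1 / eps2)) * z * besselK1 z"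
    using emeasure_pair_indep_distributed[OF assms(4,5,6) A]
      af_success_integral[OF \<open>Ps > 0\<close> less_imp_le[OF \<open>Pd > 0\<close>] \<open>sigma2 > 0\<close> gamma assms(2,3) z_def]
    by (simp add: measure_def S_def A_def indicator_def)
  moreover have "S \<in> events"
    unfolding S_def by measurable
  moreover have "{\<omega> \<in> space M. Ps\<^sup>2 * g1 \<omega> * g2 \<omega> /
      (sigma2 * (Ps * g1 \<omega> + (Ps + Pd) * g2 \<omega> + sigma2)) < gamma} = space M - S"
    by (auto simp: S_def A_def af_snr_def)
  ultimately show ?thesis
    unfolding Let_def gamma_def[symmetric] z_def[symmetric] by (simp add: prob_compl)
qed

end
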